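(* Let $g_\theta:\mathbb{R}^{D_Z}\to\mathbb{R}^{D}$ be a family of maps differentiable in the parameter $\theta$, let $p_Z$ be a distribution on $\mathbb{R}^{D_Z}$, and let $\sigma>0$. For $\boldsymbol{z}\sim p_Z$ and independent $\epsilon\sim\mathcal{N}(\boldsymbol{0},\mathcal{I})$ set $\boldsymbol{x}_0=g_\theta(\boldsymbol{z})$ and $\boldsymbol{x}_\sigma=\boldsymbol{x}_0+\sigma\epsilon$; let $p_{0,\theta}$ be the law of $\boldsymbol{x}_0$, $p_{\theta,\sigma}$ the density of $\boldsymbol{x}_\sigma$, $p(\boldsymbol{x}_\sigma\mid\boldsymbol{x}_0)=\mathcal{N}(\boldsymbol{x}_\sigma;\boldsymbol{x}_0,\sigma^2\mathcal{I})$, and $\boldsymbol{s}_{\theta,\sigma}(\boldsymbol{x})=\nabla_{\boldsymbol{x}}\log p_{\theta,\sigma}(\boldsymbol{x})$. Let $\boldsymbol{s}_q:\mathbb{R}^D\to\mathbb{R}^D$ be any differentiable vector field. For parameters $\theta,\theta'$ define $$F(\theta,\theta')=\mathbb{E}_{\boldsymbol{z}\sim p_Z,\ \epsilon\sim\mathcal{N}(\boldsymbol{0},\mathcal{I})}\Big\{2\big[\boldsymbol{s}_q(\boldsymbol{x}_\sigma)-\boldsymbol{s}_{\theta',\sigma}(\boldsymbol{x}_\sigma)\big]^T\big[\boldsymbol{s}_{\theta',\sigma}(\boldsymbol{x}_\sigma)-\nabla_{\boldsymbol{x}_\sigma}\log p(\boldsymbol{x}_\sigma\mid\boldsymbol{x}_0)\big]\Big\},$$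 where $\boldsymbol{x}_0=g_\theta(\boldsymbol{z})$, $\boldsymbol{x}_\sigma=\boldsymbol{x}_0+\sigma\epsilon$ depend on $\theta$. Assume mild regularity conditions (differentiability of $p_{\theta,\sigma}$ and $\boldsymbol{s}_{\theta,\sigma}$ in $\theta$ and $\boldsymbol{x}$, integrability, and permissibility of exchanging differentiation and expectation). Then for every $\theta$, $$\mathbb{E}_{\boldsymbol{x}_\sigma\sim p_{\theta,\sigma}}\Big\{-2\big[\boldsymbol{s}_q(\boldsymbol{x}_\sigma)-\boldsymbol{s}_{\theta,\sigma}(\boldsymbol{x}_\sigma)\big]^T\frac{\partial}{\partial\theta}\boldsymbol{s}_{\theta,\sigma}(\boldsymbol{x}_\sigma)\Big\}=\frac{\partial}{\partial\theta}F(\theta,\theta')\Big|_{\theta'=\theta},$$ where on the left $\frac{\partial}{\partial\theta}\boldsymbol{s}_{\theta,\sigma}(\boldsymbol{x}_\sigma)$ is the derivative in $\theta$ at fixed $\boldsymbol{x}_\sigma$, and on the right the derivative is taken only through the dependence of $\boldsymbol{x}_0=g_\theta(\boldsymbol{z})$ and $\boldsymbol{x}_\sigma$ on $\theta$, with the score network parameter $\theta'$ held fixed (a "stop-gradient") and then set equal to $\theta$.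
   Context: The paper writes $\boldsymbol{s}_{\operatorname{sg}[\theta],\sigma}$ for $\boldsymbol{s}_{\theta',\sigma}$ with $\theta'$ treated as a constant (no gradient flows through it) and evaluated at $\theta'=\theta$. The inner product $[\cdot]^T\frac{\partial}{\partial\theta}\boldsymbol{s}_{\theta,\sigma}$ is the vector–Jacobian product with the $D\times\dim(\theta)$ Jacobian of $\boldsymbol{s}_{\theta,\sigma}(\boldsymbol{x})$ in $\theta$. *)

theory Defs
  imports "HOL-Probability.Probability"
begin

definition gauss_pdf :: "real \<Rightarrow> 'a::euclidean_space \<Rightarrow> 'a \<Rightarrow> real" where
  "gauss_pdf \<sigma> \<mu> x =
     (2 * pi * \<sigma>\<^sup>2) powr (- real DIM('a) / 2) * exp (- (norm (x - \<mu>))\<^sup>2 / (2 * \<sigma>\<^sup>2))"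

definition std_gauss :: "'a::euclidean_space measure" where
  "std_gauss = density lborel (\<lambda>e. ennreal (gauss_pdf 1 0 e))"

definition grad :: "('a::real_inner \<Rightarrow> real) \<Rightarrow> 'a \<Rightarrow> 'a" where
  "grad f x = (SOME D. GDERIV f x :> D)"

text \<open>Density p_{theta,sigma} of x_sigma = g_theta(z) + sigma eps, z ~ pZ, eps ~ N(0,I).\<close>
definition noised_density ::
  "('p \<Rightarrow> 'z \<Rightarrow> 'd::euclidean_space) \<Rightarrow> 'z measure \<Rightarrow> real \<Rightarrow> 'p \<Rightarrow> 'd \<Rightarrow> real" where
  "noised_density g pZ \<sigma> \<theta> x = (\<integral>z. gauss_pdf \<sigma> (g \<theta> z) x \<partial>pZ)"

definition score ::
  "('p \<Rightarrow> 'z \<Rightarrow> 'd::euclidean_space) \<Rightarrow> 'z measure \<Rightarrow> real \<Rightarrow> 'p \<Rightarrow> 'd \<Rightarrow> 'd" where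
  "score g pZ \<sigma> \<theta> x = grad (\<lambda>y. ln (noised_density g pZ \<sigma> \<theta> y)) x"

definition cond_score :: "real \<Rightarrow> 'd::euclidean_space \<Rightarrow> 'd \<Rightarrow> 'd" where
  "cond_score \<sigma> x0 x = grad (\<lambda>y. ln (gauss_pdf \<sigma> x0 y)) x"

text \<open>F(theta, theta'): x0 = g_theta(z), x_sigma = x0 + sigma eps depend on theta;
  the score network parameter theta' is a separate argument (stop-gradient).\<close>
definition F_obj ::
  "('d \<Rightarrow> 'd) \<Rightarrow> ('p \<Rightarrow> 'z \<Rightarrow> 'd::euclidean_space) \<Rightarrow> 'z measure \<Rightarrow> real \<Rightarrow> 'p \<Rightarrow> 'p \<Rightarrow> real" where
  "F_obj sq g pZ \<sigma> \<theta> \<theta>' =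
     (\<integral>ze. (let x0 = g \<theta> (fst ze); x = x0 + \<sigma> *\<^sub>R snd ze in
             2 * ((sq x - score g pZ \<sigma> \<theta>' x) \<bullet> (score g pZ \<sigma> \<theta>' x - cond_score \<sigma> x0 x)))
      \<partial>(pZ \<Otimes>\<^sub>M std_gauss))"

end

theory Submission
  imports Defs
begin

text \<open>
  Along the reparametrisation x = g theta z + sigma eps the law of x has the Gaussian mixture density
  p_theta x = E_z N(x; g theta z, sigma^2 I). The Gaussian kernel has a Taylor remainder bound that is
  uniform in its centre, so the mixture may be differentiated under the integral; this gives the
  denoising score matching identity
    p_theta s_theta = E_z [N(x; g theta z, sigma^2 I) grad_x log N(x; g theta z, sigma^2 I)].
  Hence, for theta near theta0,
    F(theta, theta0) = 2 E_{p_theta} [(s_q - s_theta0) . s_theta0] - 2 E_{p_theta} [(s_q - s_theta0) . s_theta],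
  and on differentiating at theta0 the two terms in which p_theta is differentiated cancel, leaving
  -2 E_{p_theta0} [(s_q - s_theta0) . d s_theta].
\<close>

lemma grad_eqI: "GDERIV f x :> D \<Longrightarrow> grad f x = D"
proof -
  assume d: "GDERIV f x :> D"
  have "GDERIV f x :> grad f x" unfolding grad_def using d by (rule someI)
  hence "(\<lambda>h. h \<bullet> grad f x) = (\<lambda>h. h \<bullet> D)"
    using d unfolding gderiv_def by (rule has_derivative_unique)
  hence "(grad f x - D) \<bullet> grad f x = (grad f x - D) \<bullet> D" by metis
  hence "(grad f x - D) \<bullet> (grad f x - D) = 0" by (simp add: inner_diff_right)
  thus ?thesis by simp
qed

lemma has_derivative_at_quadratic_remainder:
  assumes L: "bounded_linear L"
    and bound: "\<And>y. norm (f y - f x - L (y - x)) \<le> C * (norm (y - x))\<^sup>2"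
  shows "(f has_derivative L) (at x)"
  unfolding has_derivative_at_alt
proof (intro conjI allI impI L)
  fix e :: real assume e: "e > 0"
  define C' where "C' = max C 0 + 1"
  have C': "C' > 0" "C \<le> C'" by (auto simp: C'_def)
  show "\<exists>d>0. \<forall>y. norm (y - x) < d \<longrightarrow> norm (f y - f x - L (y - x)) \<le> e * norm (y - x)"
  proof (intro exI[of _ "e / C'"] conjI allI impI)
    show "e / C' > 0" using e C' by simp
    fix y assume y: "norm (y - x) < e / C'"
    have "C * (norm (y - x))\<^sup>2 \<le> C' * (norm (y - x))\<^sup>2"
      using C' by (intro mult_right_mono) auto
    also have "\<dots> = C' * norm (y - x) * norm (y - x)"
      by (simp add: power2_eq_square)
    also have "\<dots> \<le> e * norm (y - x)"
      using y C' by (intro mult_right_mono) (auto simp: field_simps)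
    finally show "norm (f y - f x - L (y - x)) \<le> e * norm (y - x)"
      using bound[of y] by linarith
  qed
qed

subsection \<open>The Gaussian kernel\<close>

definition gauss_kernel :: "real \<Rightarrow> 'a::euclidean_space \<Rightarrow> real" where
  "gauss_kernel \<sigma> v = exp (- (norm v)\<^sup>2 / (2 * \<sigma>\<^sup>2))"

definition gauss_kernel_grad :: "real \<Rightarrow> 'a::euclidean_space \<Rightarrow> 'a" where
  "gauss_kernel_grad \<sigma> v = ((-1 / \<sigma>\<^sup>2) * gauss_kernel \<sigma> v) *\<^sub>R v"

definition gauss_kernel_hess :: "real \<Rightarrow> 'a::euclidean_space \<Rightarrow> 'a \<Rightarrow> 'a" where
  "gauss_kernel_hess \<sigma> v k =
     ((-1 / \<sigma>\<^sup>2) * gauss_kernel \<sigma> v) *\<^sub>R k + ((-1 / \<sigma>\<^sup>2) * (k \<bullet> gauss_kernel_grad \<sigma> v)) *\<^sub>R v"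

lemma gauss_kernel_pos: "gauss_kernel \<sigma> v > 0"
  by (simp add: gauss_kernel_def)

lemma gauss_kernel_le_1: "gauss_kernel \<sigma> v \<le> 1"
  by (simp add: gauss_kernel_def)

lemma has_derivative_gauss_kernel:
  assumes "\<sigma> > 0"
  shows "(gauss_kernel \<sigma> has_derivative (\<lambda>k. k \<bullet> gauss_kernel_grad \<sigma> v)) (at v)"
proof -
  have norm_sq: "GDERIV (\<lambda>y. (norm y)\<^sup>2) v :> (2::real) *\<^sub>R v"
    unfolding gderiv_def power2_norm_eq_inner
    by (rule has_derivative_eq_rhs, rule has_derivative_inner[OF has_derivative_ident has_derivative_ident])
       (auto simp: inner_commute)
  define c where "c = -1 / (2 * \<sigma>\<^sup>2)"
  have "GDERIV (\<lambda>y. c * (norm y)\<^sup>2) v :> c *\<^sub>R ((2::real) *\<^sub>R v)"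
    using has_derivative_mult_right[OF norm_sq[unfolded gderiv_def], of c] unfolding gderiv_def
    by (simp add: inner_scaleR_right mult.assoc)
  from GDERIV_DERIV_compose[OF this DERIV_exp]
  have deriv: "GDERIV (\<lambda>y. exp (c * (norm y)\<^sup>2)) v :> exp (c * (norm v)\<^sup>2) *\<^sub>R (c *\<^sub>R ((2::real) *\<^sub>R v))" .
  have kernel: "(\<lambda>y. exp (c * (norm y)\<^sup>2)) = gauss_kernel \<sigma>"
    by (rule ext) (simp add: gauss_kernel_def c_def)
  have grad: "exp (c * (norm v)\<^sup>2) *\<^sub>R (c *\<^sub>R ((2::real) *\<^sub>R v)) = gauss_kernel_grad \<sigma> v"
    using assms by (simp add: gauss_kernel_grad_def gauss_kernel_def c_def)
  show ?thesis using deriv unfolding gderiv_def kernel grad .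
qed

lemma gauss_kernel_mult_norm_sq_le:
  assumes "\<sigma> > 0"
  shows "gauss_kernel \<sigma> v * (norm v)\<^sup>2 / \<sigma>\<^sup>2 \<le> 2"
proof -
  define u where "u = (norm v)\<^sup>2 / (2 * \<sigma>\<^sup>2)"
  have "u \<le> exp u" using exp_ge_add_one_self[of u] by linarith
  hence "exp (-u) * u \<le> 1"
    by (simp add: exp_minus field_simps)
  moreover have "gauss_kernel \<sigma> v * (norm v)\<^sup>2 / \<sigma>\<^sup>2 = 2 * (exp (-u) * u)"
    using assms by (simp add: gauss_kernel_def u_def field_simps)
  ultimately show ?thesis by linarith
qed

lemma norm_gauss_kernel_grad_le:
  assumes "\<sigma> > 0"
  shows "norm (gauss_kernel_grad \<sigma> v) \<le> 3 / \<sigma>"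
proof -
  have "0 \<le> \<sigma> * norm v" using assms by simp
  hence "\<sigma> * norm v \<le> \<sigma>\<^sup>2 + (norm v)\<^sup>2"
    using sum_squares_bound[of \<sigma> "norm v"] by linarith
  hence "norm v \<le> \<sigma> + (norm v)\<^sup>2 / \<sigma>"
    using assms by (simp add: field_simps power2_eq_square)
  hence "gauss_kernel \<sigma> v * norm v \<le> gauss_kernel \<sigma> v * (\<sigma> + (norm v)\<^sup>2 / \<sigma>)"
    using gauss_kernel_pos[of \<sigma> v] by (intro mult_left_mono) auto
  also have "\<dots> = gauss_kernel \<sigma> v * \<sigma> + \<sigma> * (gauss_kernel \<sigma> v * (norm v)\<^sup>2 / \<sigma>\<^sup>2)"
    using assms by (simp add: distrib_left power2_eq_square)
  also have "\<dots> \<le> 1 * \<sigma> + \<sigma> * 2"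
    using assms gauss_kernel_le_1[of \<sigma> v] gauss_kernel_mult_norm_sq_le[OF assms, of v]
    by (intro add_mono mult_right_mono mult_left_mono) auto
  finally have "gauss_kernel \<sigma> v * norm v / \<sigma>\<^sup>2 \<le> 3 * \<sigma> / \<sigma>\<^sup>2"
    using assms by (intro divide_right_mono) auto
  thus ?thesis
    using assms gauss_kernel_pos[of \<sigma> v] by (simp add: gauss_kernel_grad_def power2_eq_square)
qed

lemma has_derivative_gauss_kernel_grad:
  assumes "\<sigma> > 0"
  shows "(gauss_kernel_grad \<sigma> has_derivative gauss_kernel_hess \<sigma> v) (at v)"
proof -
  have eq: "gauss_kernel_grad \<sigma> = (\<lambda>y. ((-1 / \<sigma>\<^sup>2) * gauss_kernel \<sigma> y) *\<^sub>R y)"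
    by (rule ext) (simp add: gauss_kernel_grad_def)
  show ?thesis
    unfolding eq gauss_kernel_hess_def[abs_def]
    using has_derivative_scaleR[OF has_derivative_mult_right[OF has_derivative_gauss_kernel[OF assms],
          of "-1 / \<sigma>\<^sup>2"] has_derivative_ident]
    by (simp add: eq)
qed

lemma norm_gauss_kernel_hess_le:
  assumes "\<sigma> > 0"
  shows "norm (gauss_kernel_hess \<sigma> v k) \<le> 3 / \<sigma>\<^sup>2 * norm k"
proof -
  have s2: "\<sigma>\<^sup>2 > 0" using assms by simp
  have "\<bar>k \<bullet> gauss_kernel_grad \<sigma> v\<bar> * norm v \<le> norm k * (norm (gauss_kernel_grad \<sigma> v) * norm v)"
    by (simp add: mult.assoc[symmetric] mult_right_mono Cauchy_Schwarz_ineq2)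
  also have "norm (gauss_kernel_grad \<sigma> v) * norm v = gauss_kernel \<sigma> v * (norm v)\<^sup>2 / \<sigma>\<^sup>2"
    using gauss_kernel_pos[of \<sigma> v] by (simp add: gauss_kernel_grad_def power2_eq_square)
  also have "norm k * \<dots> \<le> norm k * 2"
    using gauss_kernel_mult_norm_sq_le[OF assms] by (intro mult_left_mono) auto
  finally have second: "\<bar>k \<bullet> gauss_kernel_grad \<sigma> v\<bar> * norm v / \<sigma>\<^sup>2 \<le> 2 / \<sigma>\<^sup>2 * norm k"
    using s2 by (simp add: divide_right_mono mult.commute)
  have first: "gauss_kernel \<sigma> v / \<sigma>\<^sup>2 * norm k \<le> 1 / \<sigma>\<^sup>2 * norm k"
    using gauss_kernel_le_1[of \<sigma> v] s2 by (intro mult_right_mono divide_right_mono) auto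
  have "norm (gauss_kernel_hess \<sigma> v k)
      \<le> gauss_kernel \<sigma> v / \<sigma>\<^sup>2 * norm k + \<bar>k \<bullet> gauss_kernel_grad \<sigma> v\<bar> * norm v / \<sigma>\<^sup>2"
    unfolding gauss_kernel_hess_def
    using norm_triangle_ineq[of "((-1 / \<sigma>\<^sup>2) * gauss_kernel \<sigma> v) *\<^sub>R k"
        "((-1 / \<sigma>\<^sup>2) * (k \<bullet> gauss_kernel_grad \<sigma> v)) *\<^sub>R v"] gauss_kernel_pos[of \<sigma> v]
    by (simp add: abs_mult)
  also have "\<dots> \<le> 1 / \<sigma>\<^sup>2 * norm k + 2 / \<sigma>\<^sup>2 * norm k"
    using first second by linarith
  also have "\<dots> = 3 / \<sigma>\<^sup>2 * norm k"
    by (simp add: field_simps)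
  finally show ?thesis .
qed

lemma gauss_kernel_grad_lipschitz:
  assumes "\<sigma> > 0"
  shows "norm (gauss_kernel_grad \<sigma> w - gauss_kernel_grad \<sigma> v) \<le> 3 / \<sigma>\<^sup>2 * norm (w - v)"
  by (rule differentiable_bound[where S=UNIV and f'="gauss_kernel_hess \<sigma>"])
     (auto intro: has_derivative_at_withinI has_derivative_gauss_kernel_grad[OF assms]
                  onorm_le norm_gauss_kernel_hess_le[OF assms])

text \<open>The gradient is Lipschitz, so the linearisation error is quadratic.\<close>
lemma gauss_kernel_taylor_bound:
  assumes "\<sigma> > 0"
  shows "\<bar>gauss_kernel \<sigma> w - gauss_kernel \<sigma> v - (w - v) \<bullet> gauss_kernel_grad \<sigma> v\<bar>
           \<le> 3 / \<sigma>\<^sup>2 * (norm (w - v))\<^sup>2"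
proof -
  define f where "f y = gauss_kernel \<sigma> y - y \<bullet> gauss_kernel_grad \<sigma> v" for y
  define f' where "f' y k = k \<bullet> gauss_kernel_grad \<sigma> y - k \<bullet> gauss_kernel_grad \<sigma> v" for y k
  have "norm (f w - f v) \<le> (3 / \<sigma>\<^sup>2 * norm (w - v)) * norm (w - v)"
  proof (rule differentiable_bound[where S="closed_segment v w" and f'=f'])
    fix x assume x: "x \<in> closed_segment v w"
    have "(f has_derivative f' x) (at x)"
      unfolding f_def[abs_def] f'_def
      by (intro has_derivative_diff has_derivative_gauss_kernel[OF assms]
          bounded_linear.has_derivative[OF bounded_linear_inner_left] has_derivative_ident)
    thus "(f has_derivative f' x) (at x within closed_segment v w)"
      by (rule has_derivative_at_withinI)
    show "onorm (f' x) \<le> 3 / \<sigma>\<^sup>2 * norm (w - v)"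
    proof (rule onorm_le)
      fix k
      have "norm (f' x k) = \<bar>k \<bullet> (gauss_kernel_grad \<sigma> x - gauss_kernel_grad \<sigma> v)\<bar>"
        by (simp add: f'_def inner_diff_right)
      also have "\<dots> \<le> norm k * norm (gauss_kernel_grad \<sigma> x - gauss_kernel_grad \<sigma> v)"
        by (rule Cauchy_Schwarz_ineq2)
      also have "\<dots> \<le> norm k * (3 / \<sigma>\<^sup>2 * norm (x - v))"
        by (intro mult_left_mono gauss_kernel_grad_lipschitz[OF assms]) auto
      also have "\<dots> \<le> norm k * (3 / \<sigma>\<^sup>2 * norm (w - v))"
        using segment_bound1[OF x] assms by (intro mult_left_mono) auto
      finally show "norm (f' x k) \<le> 3 / \<sigma>\<^sup>2 * norm (w - v) * norm k"
        by (simp add: mult.commute)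
    qed
  qed auto
  moreover have "f w - f v = gauss_kernel \<sigma> w - gauss_kernel \<sigma> v - (w - v) \<bullet> gauss_kernel_grad \<sigma> v"
    by (simp add: f_def inner_diff_left)
  ultimately show ?thesis by (simp add: power2_eq_square mult.assoc)
qed

lemma borel_measurable_gauss_kernel [measurable]:
  "(gauss_kernel \<sigma> :: 'a::euclidean_space \<Rightarrow> real) \<in> borel_measurable borel"
  unfolding gauss_kernel_def[abs_def] by measurable

lemma borel_measurable_gauss_kernel_grad [measurable]:
  "(gauss_kernel_grad \<sigma> :: 'a::euclidean_space \<Rightarrow> 'a) \<in> borel_measurable borel"
  unfolding gauss_kernel_grad_def[abs_def] by measurable

subsection \<open>The Gaussian density and the conditional score\<close>

definition gauss_const :: "real \<Rightarrow> 'a::euclidean_space itself \<Rightarrow> real" where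
  "gauss_const \<sigma> _ = (2 * pi * \<sigma>\<^sup>2) powr (- real DIM('a) / 2)"

lemma gauss_const_pos: "\<sigma> > 0 \<Longrightarrow> gauss_const \<sigma> TYPE('a::euclidean_space) > 0"
  by (simp add: gauss_const_def)

lemma gauss_pdf_eq_kernel:
  "gauss_pdf \<sigma> \<mu> (x::'a::euclidean_space) = gauss_const \<sigma> TYPE('a) * gauss_kernel \<sigma> (x - \<mu>)"
  by (simp add: gauss_pdf_def gauss_const_def gauss_kernel_def)

lemma gauss_pdf_pos: "\<sigma> > 0 \<Longrightarrow> gauss_pdf \<sigma> \<mu> x > 0"
  unfolding gauss_pdf_eq_kernel by (simp add: gauss_const_pos gauss_kernel_pos)

lemma borel_measurable_gauss_pdf [measurable]:
  assumes [measurable]: "\<mu> \<in> borel_measurable M" "X \<in> borel_measurable M"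
  shows "(\<lambda>w. gauss_pdf \<sigma> (\<mu> w :: 'a::euclidean_space) (X w)) \<in> borel_measurable M"
  unfolding gauss_pdf_def by measurable

lemma gauss_pdf_gderiv:
  assumes "\<sigma> > 0"
  shows "GDERIV (gauss_pdf \<sigma> \<mu>) x :> gauss_const \<sigma> TYPE('a) *\<^sub>R gauss_kernel_grad \<sigma> (x - \<mu> :: 'a::euclidean_space)"
proof -
  have "((\<lambda>y. gauss_kernel \<sigma> (y - \<mu>)) has_derivative (\<lambda>h. (h - 0) \<bullet> gauss_kernel_grad \<sigma> (x - \<mu>))) (at x)"
    by (rule has_derivative_compose[OF has_derivative_diff[OF has_derivative_ident has_derivative_const]
          has_derivative_gauss_kernel[OF assms]])
  then show ?thesis
    unfolding gderiv_def gauss_pdf_eq_kernel[abs_def] by (simp add: has_derivative_mult_right)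
qed

lemma gauss_pdf_scaleR_cond_score:
  assumes "\<sigma> > 0"
  shows "gauss_pdf \<sigma> \<mu> x *\<^sub>R cond_score \<sigma> \<mu> x
           = gauss_const \<sigma> TYPE('a) *\<^sub>R gauss_kernel_grad \<sigma> (x - \<mu> :: 'a::euclidean_space)"
proof -
  have pos: "gauss_pdf \<sigma> \<mu> x > 0" by (rule gauss_pdf_pos[OF assms])
  have "GDERIV (\<lambda>y. ln (gauss_pdf \<sigma> \<mu> y)) x
          :> inverse (gauss_pdf \<sigma> \<mu> x) *\<^sub>R (gauss_const \<sigma> TYPE('a) *\<^sub>R gauss_kernel_grad \<sigma> (x - \<mu>))"
    by (rule GDERIV_DERIV_compose[OF gauss_pdf_gderiv[OF assms] DERIV_ln[OF pos]])
  hence "cond_score \<sigma> \<mu> x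
           = inverse (gauss_pdf \<sigma> \<mu> x) *\<^sub>R (gauss_const \<sigma> TYPE('a) *\<^sub>R gauss_kernel_grad \<sigma> (x - \<mu>))"
    unfolding cond_score_def by (rule grad_eqI)
  thus ?thesis using pos by simp
qed

lemma cond_score_gauss:
  assumes "\<sigma> > 0"
  shows "cond_score \<sigma> \<mu> x = (1 / \<sigma>\<^sup>2) *\<^sub>R (\<mu> - x :: 'a::euclidean_space)"
proof -
  have "gauss_pdf \<sigma> \<mu> x *\<^sub>R cond_score \<sigma> \<mu> x = gauss_pdf \<sigma> \<mu> x *\<^sub>R ((1 / \<sigma>\<^sup>2) *\<^sub>R (\<mu> - x))"
    unfolding gauss_pdf_scaleR_cond_score[OF assms]
    by (simp add: gauss_kernel_grad_def gauss_pdf_eq_kernel algebra_simps)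
  thus ?thesis using gauss_pdf_pos[OF assms, of \<mu> x] by (subst (asm) scaleR_cancel_left) auto
qed

subsection \<open>Gaussian mixtures\<close>

context
  fixes M :: "'z measure" and G :: "'z \<Rightarrow> 'a::euclidean_space" and \<sigma> :: real
  assumes M: "prob_space M" and G [measurable]: "G \<in> borel_measurable M" and sigma_pos: "\<sigma> > 0"
begin

interpretation prob_space M by (rule M)

lemma integrable_gauss_mixture: "integrable M (\<lambda>z. gauss_pdf \<sigma> (G z) y)"
proof (rule integrable_const_bound[where B="gauss_const \<sigma> TYPE('a)"])
  show "AE z in M. norm (gauss_pdf \<sigma> (G z) y) \<le> gauss_const \<sigma> TYPE('a)"
    using gauss_const_pos[OF sigma_pos, where 'a='a]
    by (intro AE_I2) (simp add: gauss_pdf_eq_kernel abs_mult abs_of_pos gauss_kernel_pos gauss_kernel_le_1)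
qed measurable

lemma integrable_gauss_grad_mixture:
  "integrable M (\<lambda>z. gauss_const \<sigma> TYPE('a) *\<^sub>R gauss_kernel_grad \<sigma> (y - G z))"
proof (rule integrable_const_bound[where B="gauss_const \<sigma> TYPE('a) * (3 / \<sigma>)"])
  show "AE z in M. norm (gauss_const \<sigma> TYPE('a) *\<^sub>R gauss_kernel_grad \<sigma> (y - G z))
                     \<le> gauss_const \<sigma> TYPE('a) * (3 / \<sigma>)"
  proof (intro AE_I2)
    fix z
    have "gauss_const \<sigma> TYPE('a) * norm (gauss_kernel_grad \<sigma> (y - G z)) \<le> gauss_const \<sigma> TYPE('a) * (3 / \<sigma>)"
      using gauss_const_pos[OF sigma_pos, where 'a='a]
      by (intro mult_left_mono norm_gauss_kernel_grad_le[OF sigma_pos]) simp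
    then show "norm (gauss_const \<sigma> TYPE('a) *\<^sub>R gauss_kernel_grad \<sigma> (y - G z)) \<le> gauss_const \<sigma> TYPE('a) * (3 / \<sigma>)"
      using gauss_const_pos[OF sigma_pos, where 'a='a] by simp
  qed
qed measurable

lemma gauss_mixture_pos: "0 < (\<integral>z. gauss_pdf \<sigma> (G z) x \<partial>M)"
proof -
  have nonneg: "AE z in M. 0 \<le> gauss_pdf \<sigma> (G z) x"
    by (intro AE_I2 gauss_pdf_pos[OF sigma_pos, THEN less_imp_le])
  have "\<not> (AE z in M. gauss_pdf \<sigma> (G z) x = 0)"
  proof
    assume "AE z in M. gauss_pdf \<sigma> (G z) x = 0"
    moreover have "AE z in M. gauss_pdf \<sigma> (G z) x = 0 \<longrightarrow> False"
    proof (intro AE_I2 impI)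
      fix z assume "gauss_pdf \<sigma> (G z) x = 0"
      with gauss_pdf_pos[OF sigma_pos, of "G z" x] show False by simp
    qed
    ultimately have "AE z in M. False" by (rule AE_mp)
    then show False using AE_False by simp
  qed
  hence "(\<integral>z. gauss_pdf \<sigma> (G z) x \<partial>M) \<noteq> 0"
    using integral_nonneg_eq_0_iff_AE[OF integrable_gauss_mixture nonneg] by simp
  thus ?thesis using integral_nonneg_AE[OF nonneg] by linarith
qed

text \<open>The kernel's Taylor bound is uniform in the centre, so it survives averaging over the centres.\<close>
lemma gauss_mixture_taylor_bound:
  "\<bar>(\<integral>z. gauss_pdf \<sigma> (G z) y \<partial>M) - (\<integral>z. gauss_pdf \<sigma> (G z) x \<partial>M)
      - (y - x) \<bullet> (\<integral>z. gauss_const \<sigma> TYPE('a) *\<^sub>R gauss_kernel_grad \<sigma> (x - G z) \<partial>M)\<bar>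
     \<le> gauss_const \<sigma> TYPE('a) * (3 / \<sigma>\<^sup>2) * (norm (y - x))\<^sup>2"
proof -
  define c where "c = gauss_const \<sigma> TYPE('a)"
  define V where "V = (\<integral>z. c *\<^sub>R gauss_kernel_grad \<sigma> (x - G z) \<partial>M)"
  have c: "c > 0" unfolding c_def by (rule gauss_const_pos[OF sigma_pos])
  define f where "f z = gauss_pdf \<sigma> (G z) y - gauss_pdf \<sigma> (G z) x
                        - (y - x) \<bullet> (c *\<^sub>R gauss_kernel_grad \<sigma> (x - G z))" for z
  note int_pdf = integrable_gauss_mixture and int_grad = integrable_gauss_grad_mixture[folded c_def]
  have int_inner: "integrable M (\<lambda>z. (y - x) \<bullet> (c *\<^sub>R gauss_kernel_grad \<sigma> (x - G z)))"
    using int_grad by (rule integrable_inner_right)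
  have "(\<integral>z. gauss_pdf \<sigma> (G z) y \<partial>M) - (\<integral>z. gauss_pdf \<sigma> (G z) x \<partial>M) - (y - x) \<bullet> V = integral\<^sup>L M f"
    unfolding f_def V_def
    by (simp only: Bochner_Integration.integral_diff[OF Bochner_Integration.integrable_diff[OF int_pdf int_pdf] int_inner]
          Bochner_Integration.integral_diff[OF int_pdf int_pdf] integral_inner_right[OF int_grad])
  also have "\<bar>integral\<^sup>L M f\<bar> \<le> (\<integral>z. norm (f z) \<partial>M)"
    using integral_norm_bound[of M f] by simp
  also have "\<dots> \<le> c * (3 / \<sigma>\<^sup>2) * (norm (y - x))\<^sup>2"
  proof (rule integral_le_const)
    show "integrable M (\<lambda>z. norm (f z))"
      unfolding f_def using int_pdf int_inner by (intro integrable_norm Bochner_Integration.integrable_diff)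
    show "AE z in M. norm (f z) \<le> c * (3 / \<sigma>\<^sup>2) * (norm (y - x))\<^sup>2"
    proof (intro AE_I2)
      fix z
      have "f z = c * (gauss_kernel \<sigma> (y - G z) - gauss_kernel \<sigma> (x - G z)
                       - ((y - G z) - (x - G z)) \<bullet> gauss_kernel_grad \<sigma> (x - G z))"
        unfolding f_def gauss_pdf_eq_kernel c_def by (simp add: algebra_simps)
      hence "norm (f z) = c * \<bar>gauss_kernel \<sigma> (y - G z) - gauss_kernel \<sigma> (x - G z)
                       - ((y - G z) - (x - G z)) \<bullet> gauss_kernel_grad \<sigma> (x - G z)\<bar>"
        using c by (simp add: abs_mult)
      also have "\<dots> \<le> c * (3 / \<sigma>\<^sup>2 * (norm ((y - G z) - (x - G z)))\<^sup>2)"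
        using c by (intro mult_left_mono gauss_kernel_taylor_bound[OF sigma_pos]) auto
      finally show "norm (f z) \<le> c * (3 / \<sigma>\<^sup>2) * (norm (y - x))\<^sup>2"
        by (simp add: mult.assoc)
    qed
  qed
  finally show ?thesis unfolding c_def V_def .
qed

lemma has_derivative_gauss_mixture:
  "((\<lambda>y. \<integral>z. gauss_pdf \<sigma> (G z) y \<partial>M) has_derivative
      (\<lambda>k. k \<bullet> (\<integral>z. gauss_const \<sigma> TYPE('a) *\<^sub>R gauss_kernel_grad \<sigma> (x - G z) \<partial>M))) (at x)"
  by (rule has_derivative_at_quadratic_remainder[OF bounded_linear_inner_left,
        where C="gauss_const \<sigma> TYPE('a) * (3 / \<sigma>\<^sup>2)"])
     (simp only: real_norm_def gauss_mixture_taylor_bound)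

end

text \<open>The score of the noised density is the posterior mean of the conditional score
  (the identity underlying denoising score matching).\<close>
lemma noised_density_scaleR_score:
  fixes g :: "'p \<Rightarrow> 'z \<Rightarrow> 'a::euclidean_space"
  assumes pZ: "prob_space pZ" and g: "g \<theta> \<in> borel_measurable pZ" and sigma_pos: "\<sigma> > 0"
  shows "noised_density g pZ \<sigma> \<theta> x *\<^sub>R score g pZ \<sigma> \<theta> x
           = (\<integral>z. gauss_pdf \<sigma> (g \<theta> z) x *\<^sub>R cond_score \<sigma> (g \<theta> z) x \<partial>pZ)"
proof -
  define V where "V = (\<integral>z. gauss_const \<sigma> TYPE('a) *\<^sub>R gauss_kernel_grad \<sigma> (x - g \<theta> z) \<partial>pZ)"
  have density: "noised_density g pZ \<sigma> \<theta> = (\<lambda>y. \<integral>z. gauss_pdf \<sigma> (g \<theta> z) y \<partial>pZ)"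
    by (rule ext) (simp add: noised_density_def)
  have pos: "noised_density g pZ \<sigma> \<theta> x > 0"
    unfolding density by (rule gauss_mixture_pos[OF pZ g sigma_pos])
  have "GDERIV (noised_density g pZ \<sigma> \<theta>) x :> V"
    unfolding gderiv_def density V_def by (rule has_derivative_gauss_mixture[OF pZ g sigma_pos])
  from GDERIV_DERIV_compose[OF this DERIV_ln[OF pos]]
  have "score g pZ \<sigma> \<theta> x = inverse (noised_density g pZ \<sigma> \<theta> x) *\<^sub>R V"
    unfolding score_def by (rule grad_eqI)
  hence "noised_density g pZ \<sigma> \<theta> x *\<^sub>R score g pZ \<sigma> \<theta> x = V" using pos by simp
  also have "V = (\<integral>z. gauss_pdf \<sigma> (g \<theta> z) x *\<^sub>R cond_score \<sigma> (g \<theta> z) x \<partial>pZ)"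
    unfolding V_def by (simp add: gauss_pdf_scaleR_cond_score[OF sigma_pos])
  finally show ?thesis .
qed

subsection \<open>The reparametrised noise\<close>

lemma gauss_pdf_affine:
  assumes "\<sigma> > 0"
  shows "\<sigma> ^ DIM('a) * gauss_pdf \<sigma> \<mu> (\<mu> + \<sigma> *\<^sub>R e) = gauss_pdf 1 0 (e :: 'a::euclidean_space)"
proof -
  define n where "n = real DIM('a)"
  have "(2 * pi * \<sigma>\<^sup>2) powr (- n / 2) = (2 * pi) powr (- n / 2) * (\<sigma> powr 2) powr (- n / 2)"
    using assms by (simp add: powr_mult powr_realpow)
  also have "(\<sigma> powr 2) powr (- n / 2) = \<sigma> powr (- n)"
    by (simp add: powr_powr)
  finally have "\<sigma> powr n * (2 * pi * \<sigma>\<^sup>2) powr (- n / 2) = (2 * pi) powr (- n / 2)"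
    using assms by (simp add: powr_add[symmetric])
  then have "\<sigma> ^ DIM('a) * (2 * pi * \<sigma>\<^sup>2) powr (- n / 2) = (2 * pi) powr (- n / 2)"
    using assms by (simp add: n_def powr_realpow)
  moreover have "(norm (\<sigma> *\<^sub>R e))\<^sup>2 / (2 * \<sigma>\<^sup>2) = (norm e)\<^sup>2 / 2"
    using assms by (simp add: power_mult_distrib)
  ultimately show ?thesis
    unfolding gauss_pdf_def n_def by (simp add: mult.assoc[symmetric])
qed

lemma nn_integral_gauss_affine:
  fixes F :: "'a::euclidean_space \<Rightarrow> ennreal"
  assumes sigma_pos: "\<sigma> > 0" and F [measurable]: "F \<in> borel_measurable borel"
  shows "(\<integral>\<^sup>+ e. ennreal (gauss_pdf 1 0 e) * F (\<mu> + \<sigma> *\<^sub>R e) \<partial>lborel)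
           = (\<integral>\<^sup>+ x. ennreal (gauss_pdf \<sigma> \<mu> x) * F x \<partial>lborel)"
proof -
  have "(\<integral>\<^sup>+ x. ennreal (gauss_pdf \<sigma> \<mu> x) * F x \<partial>lborel)
      = (\<integral>\<^sup>+ x. ennreal (gauss_pdf \<sigma> \<mu> x) * F x
           \<partial>density (distr lborel borel (\<lambda>x. \<mu> + \<sigma> *\<^sub>R x)) (\<lambda>_. \<bar>\<sigma>\<bar> ^ DIM('a)))"
    using sigma_pos by (subst lborel_affine[of \<sigma> \<mu>]) auto
  also have "\<dots> = (\<integral>\<^sup>+ x. ennreal (\<bar>\<sigma>\<bar> ^ DIM('a)) * (ennreal (gauss_pdf \<sigma> \<mu> x) * F x)
                     \<partial>distr lborel borel (\<lambda>x. \<mu> + \<sigma> *\<^sub>R x))"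
    by (rule nn_integral_density) auto
  also have "\<dots> = (\<integral>\<^sup>+ e. ennreal (\<bar>\<sigma>\<bar> ^ DIM('a))
                     * (ennreal (gauss_pdf \<sigma> \<mu> (\<mu> + \<sigma> *\<^sub>R e)) * F (\<mu> + \<sigma> *\<^sub>R e)) \<partial>lborel)"
    by (rule nn_integral_distr) auto
  also have "\<dots> = (\<integral>\<^sup>+ e. ennreal (gauss_pdf 1 0 e) * F (\<mu> + \<sigma> *\<^sub>R e) \<partial>lborel)"
  proof (rule nn_integral_cong)
    fix e :: 'a
    have "ennreal (\<bar>\<sigma>\<bar> ^ DIM('a)) * ennreal (gauss_pdf \<sigma> \<mu> (\<mu> + \<sigma> *\<^sub>R e))
            = ennreal (\<sigma> ^ DIM('a) * gauss_pdf \<sigma> \<mu> (\<mu> + \<sigma> *\<^sub>R e))"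
      using sigma_pos gauss_pdf_pos[OF sigma_pos, of \<mu> "\<mu> + \<sigma> *\<^sub>R e"]
      by (simp add: ennreal_mult)
    also have "\<dots> = ennreal (gauss_pdf 1 0 e)"
      by (simp add: gauss_pdf_affine[OF sigma_pos])
    finally show "ennreal (\<bar>\<sigma>\<bar> ^ DIM('a)) * (gauss_pdf \<sigma> \<mu> (\<mu> + \<sigma> *\<^sub>R e) * F (\<mu> + \<sigma> *\<^sub>R e))
                 = gauss_pdf 1 0 e * F (\<mu> + \<sigma> *\<^sub>R e)"
      by (simp add: mult.assoc[symmetric])
  qed
  finally show ?thesis ..
qed

lemma sets_std_gauss [simp, measurable_cong]: "sets (std_gauss :: 'a::euclidean_space measure) = sets borel"
  by (simp add: std_gauss_def)

lemma sigma_finite_std_gauss: "sigma_finite_measure (std_gauss :: 'a::euclidean_space measure)"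
  unfolding std_gauss_def
  by (subst sigma_finite_measure.sigma_finite_iff_density_finite[OF sigma_finite_lborel])
     (auto simp: gauss_pdf_def)

context
  fixes Z :: "'z measure" and G :: "'z \<Rightarrow> 'a::euclidean_space" and \<sigma> :: real
  assumes G [measurable]: "G \<in> borel_measurable Z" and sigma_pos: "\<sigma> > 0"
begin

lemma measurable_noise_pair [measurable]:
  "(\<lambda>w. (fst w, G (fst w) + \<sigma> *\<^sub>R snd w)) \<in> measurable (Z \<Otimes>\<^sub>M std_gauss) (Z \<Otimes>\<^sub>M lborel)"
  by measurable

lemma nn_integral_noise_pair:
  fixes f :: "'z \<times> 'a \<Rightarrow> ennreal"
  assumes f [measurable]: "f \<in> borel_measurable (Z \<Otimes>\<^sub>M lborel)"
  shows "(\<integral>\<^sup>+ w. f (fst w, G (fst w) + \<sigma> *\<^sub>R snd w) \<partial>(Z \<Otimes>\<^sub>M std_gauss))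
           = (\<integral>\<^sup>+ w. ennreal (gauss_pdf \<sigma> (G (fst w)) (snd w)) * f w \<partial>(Z \<Otimes>\<^sub>M lborel))"
proof -
  interpret N: sigma_finite_measure "std_gauss :: 'a measure" by (rule sigma_finite_std_gauss)
  have "(\<integral>\<^sup>+ w. f (fst w, G (fst w) + \<sigma> *\<^sub>R snd w) \<partial>(Z \<Otimes>\<^sub>M std_gauss))
      = (\<integral>\<^sup>+ z. \<integral>\<^sup>+ e. f (z, G z + \<sigma> *\<^sub>R e) \<partial>std_gauss \<partial>Z)"
    by (subst N.nn_integral_fst[symmetric]) auto
  also have "\<dots> = (\<integral>\<^sup>+ z. \<integral>\<^sup>+ x. ennreal (gauss_pdf \<sigma> (G z) x) * f (z, x) \<partial>lborel \<partial>Z)"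
  proof (rule nn_integral_cong)
    fix z assume z: "z \<in> space Z"
    have [measurable]: "(\<lambda>x. f (z, x)) \<in> borel_measurable borel"
      using measurable_Pair2[OF f z] by simp
    have "(\<integral>\<^sup>+ e. f (z, G z + \<sigma> *\<^sub>R e) \<partial>std_gauss)
        = (\<integral>\<^sup>+ e. ennreal (gauss_pdf 1 0 e) * f (z, G z + \<sigma> *\<^sub>R e) \<partial>lborel)"
      unfolding std_gauss_def by (rule nn_integral_density) auto
    also have "\<dots> = (\<integral>\<^sup>+ x. ennreal (gauss_pdf \<sigma> (G z) x) * f (z, x) \<partial>lborel)"
      by (rule nn_integral_gauss_affine[OF sigma_pos]) measurable
    finally show "(\<integral>\<^sup>+ e. f (z, G z + \<sigma> *\<^sub>R e) \<partial>std_gauss) = \<dots>" .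
  qed
  also have "\<dots> = (\<integral>\<^sup>+ w. ennreal (gauss_pdf \<sigma> (G (fst w)) (snd w)) * f w \<partial>(Z \<Otimes>\<^sub>M lborel))"
    by (subst lborel.nn_integral_fst[symmetric]) auto
  finally show ?thesis .
qed

lemma distr_noise_pair_eq_density:
  "distr (Z \<Otimes>\<^sub>M std_gauss) (Z \<Otimes>\<^sub>M lborel) (\<lambda>w. (fst w, G (fst w) + \<sigma> *\<^sub>R snd w))
     = density (Z \<Otimes>\<^sub>M lborel) (\<lambda>w. gauss_pdf \<sigma> (G (fst w)) (snd w))"
proof (rule measure_eqI)
  fix A assume "A \<in> sets (distr (Z \<Otimes>\<^sub>M std_gauss) (Z \<Otimes>\<^sub>M lborel) (\<lambda>w. (fst w, G (fst w) + \<sigma> *\<^sub>R snd w)))"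
  hence A [measurable]: "A \<in> sets (Z \<Otimes>\<^sub>M lborel)" by simp
  have A_borel: "A \<in> sets (Z \<Otimes>\<^sub>M borel)"
    using A sets_pair_measure_cong[OF refl sets_lborel, of Z] by simp
  have "emeasure (distr (Z \<Otimes>\<^sub>M std_gauss) (Z \<Otimes>\<^sub>M lborel) (\<lambda>w. (fst w, G (fst w) + \<sigma> *\<^sub>R snd w))) A
      = (\<integral>\<^sup>+ w. indicator A w \<partial>distr (Z \<Otimes>\<^sub>M std_gauss) (Z \<Otimes>\<^sub>M lborel) (\<lambda>w. (fst w, G (fst w) + \<sigma> *\<^sub>R snd w)))"
    using A by simp
  also have "\<dots> = (\<integral>\<^sup>+ w. indicator A (fst w, G (fst w) + \<sigma> *\<^sub>R snd w) \<partial>(Z \<Otimes>\<^sub>M std_gauss))"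
    by (rule nn_integral_distr[OF measurable_noise_pair]) (use A_borel in simp)
  also have "\<dots> = (\<integral>\<^sup>+ w. ennreal (gauss_pdf \<sigma> (G (fst w)) (snd w)) * indicator A w \<partial>(Z \<Otimes>\<^sub>M lborel))"
    by (rule nn_integral_noise_pair) (rule borel_measurable_indicator[OF A])
  also have "\<dots> = emeasure (density (Z \<Otimes>\<^sub>M lborel) (\<lambda>w. gauss_pdf \<sigma> (G (fst w)) (snd w))) A"
    by (rule emeasure_density[symmetric]) (use A in auto)
  finally show "emeasure (distr (Z \<Otimes>\<^sub>M std_gauss) (Z \<Otimes>\<^sub>M lborel) (\<lambda>w. (fst w, G (fst w) + \<sigma> *\<^sub>R snd w))) A
      = emeasure (density (Z \<Otimes>\<^sub>M lborel) (\<lambda>w. gauss_pdf \<sigma> (G (fst w)) (snd w))) A" .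
qed simp

lemma
  assumes \<psi> [measurable]: "\<psi> \<in> borel_measurable (Z \<Otimes>\<^sub>M lborel)"
    and int: "integrable (Z \<Otimes>\<^sub>M std_gauss) (\<lambda>w. \<psi> (fst w, G (fst w) + \<sigma> *\<^sub>R snd w))"
  shows integrable_noise_pair:
      "integrable (Z \<Otimes>\<^sub>M lborel) (\<lambda>w. gauss_pdf \<sigma> (G (fst w)) (snd w) * \<psi> w :: real)"
    and integral_noise_pair:
      "(\<integral>w. \<psi> (fst w, G (fst w) + \<sigma> *\<^sub>R snd w) \<partial>(Z \<Otimes>\<^sub>M std_gauss))
         = (\<integral>w. gauss_pdf \<sigma> (G (fst w)) (snd w) * \<psi> w \<partial>(Z \<Otimes>\<^sub>M lborel))"
proof -
  have nonneg: "AE w in Z \<Otimes>\<^sub>M lborel. 0 \<le> gauss_pdf \<sigma> (G (fst w)) (snd w)"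
    by (intro AE_I2 gauss_pdf_pos[OF sigma_pos, THEN less_imp_le])
  have "integrable (density (Z \<Otimes>\<^sub>M lborel) (\<lambda>w. gauss_pdf \<sigma> (G (fst w)) (snd w))) \<psi>"
    using int unfolding distr_noise_pair_eq_density[symmetric]
    by (subst integrable_distr_eq) auto
  then show "integrable (Z \<Otimes>\<^sub>M lborel) (\<lambda>w. gauss_pdf \<sigma> (G (fst w)) (snd w) * \<psi> w)"
    by (subst (asm) integrable_density[OF _ _ nonneg]) auto
  have "(\<integral>w. \<psi> (fst w, G (fst w) + \<sigma> *\<^sub>R snd w) \<partial>(Z \<Otimes>\<^sub>M std_gauss))
      = integral\<^sup>L (density (Z \<Otimes>\<^sub>M lborel) (\<lambda>w. gauss_pdf \<sigma> (G (fst w)) (snd w))) \<psi>"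
    unfolding distr_noise_pair_eq_density[symmetric] by (rule integral_distr[symmetric]) auto
  also have "\<dots> = (\<integral>w. gauss_pdf \<sigma> (G (fst w)) (snd w) * \<psi> w \<partial>(Z \<Otimes>\<^sub>M lborel))"
    by (subst integral_density[OF _ _ nonneg]) auto
  finally show "(\<integral>w. \<psi> (fst w, G (fst w) + \<sigma> *\<^sub>R snd w) \<partial>(Z \<Otimes>\<^sub>M std_gauss))
      = (\<integral>w. gauss_pdf \<sigma> (G (fst w)) (snd w) * \<psi> w \<partial>(Z \<Otimes>\<^sub>M lborel))" .
qed

lemma integral_noise_pair_iterated:
  assumes Z: "sigma_finite_measure Z"
    and \<psi> [measurable]: "\<psi> \<in> borel_measurable (Z \<Otimes>\<^sub>M lborel)"
    and int: "integrable (Z \<Otimes>\<^sub>M std_gauss) (\<lambda>w. \<psi> (fst w, G (fst w) + \<sigma> *\<^sub>R snd w))"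
  shows "(\<integral>w. \<psi> (fst w, G (fst w) + \<sigma> *\<^sub>R snd w) \<partial>(Z \<Otimes>\<^sub>M std_gauss))
           = (\<integral>x. (\<integral>z. gauss_pdf \<sigma> (G z) x * \<psi> (z, x) \<partial>Z) \<partial>lborel)"
proof -
  interpret pair_sigma_finite Z "lborel :: 'a measure"
    by (intro pair_sigma_finite.intro Z sigma_finite_lborel)
  show ?thesis
    unfolding integral_noise_pair[OF \<psi> int]
    using integral_snd[of "\<lambda>z x. gauss_pdf \<sigma> (G z) x * \<psi> (z, x)"] integrable_noise_pair[OF \<psi> int]
    by (simp add: split_beta')
qed

end

subsection \<open>The objective F in terms of the noised density\<close>

context
  fixes g :: "'p \<Rightarrow> 'z \<Rightarrow> 'd::euclidean_space" and pZ :: "'z measure" and \<sigma> :: real and \<theta> :: 'p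
  assumes pZ: "prob_space pZ" and g [measurable]: "g \<theta> \<in> borel_measurable pZ" and sigma_pos: "\<sigma> > 0"
begin

lemma integral_noised_sample:
  assumes f [measurable]: "f \<in> borel_measurable borel"
    and int: "integrable (pZ \<Otimes>\<^sub>M std_gauss) (\<lambda>w. f (g \<theta> (fst w) + \<sigma> *\<^sub>R snd w) :: real)"
  shows "(\<integral>w. f (g \<theta> (fst w) + \<sigma> *\<^sub>R snd w) \<partial>(pZ \<Otimes>\<^sub>M std_gauss))
           = (\<integral>x. noised_density g pZ \<sigma> \<theta> x * f x \<partial>lborel)"
proof -
  have f_snd: "(\<lambda>w. f (snd w)) \<in> borel_measurable (pZ \<Otimes>\<^sub>M lborel)" by measurable
  have "(\<integral>w. f (g \<theta> (fst w) + \<sigma> *\<^sub>R snd w) \<partial>(pZ \<Otimes>\<^sub>M std_gauss))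
      = (\<integral>x. (\<integral>z. gauss_pdf \<sigma> (g \<theta> z) x * f x \<partial>pZ) \<partial>lborel)"
    using integral_noise_pair_iterated[OF g sigma_pos prob_space_imp_sigma_finite[OF pZ] f_snd] int
    by (simp only: snd_conv)
  also have "\<dots> = (\<integral>x. noised_density g pZ \<sigma> \<theta> x * f x \<partial>lborel)"
    by (simp add: noised_density_def)
  finally show ?thesis .
qed

lemma integral_inner_cond_score:
  assumes f [measurable]: "f \<in> borel_measurable borel"
    and int: "integrable (pZ \<Otimes>\<^sub>M std_gauss) (\<lambda>w. let x0 = g \<theta> (fst w); x = x0 + \<sigma> *\<^sub>R snd w in
                 f x \<bullet> cond_score \<sigma> x0 x)"
  shows "(\<integral>w. (let x0 = g \<theta> (fst w); x = x0 + \<sigma> *\<^sub>R snd w in f x \<bullet> cond_score \<sigma> x0 x)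
             \<partial>(pZ \<Otimes>\<^sub>M std_gauss))
           = (\<integral>x. noised_density g pZ \<sigma> \<theta> x * (f x \<bullet> score g pZ \<sigma> \<theta> x) \<partial>lborel)"
proof -
  define \<psi> where "\<psi> w = f (snd w) \<bullet> cond_score \<sigma> (g \<theta> (fst w)) (snd w)" for w
  have \<psi>_meas: "\<psi> \<in> borel_measurable (pZ \<Otimes>\<^sub>M lborel)"
    unfolding \<psi>_def cond_score_gauss[OF sigma_pos] by measurable
  have sample: "(\<lambda>w. let x0 = g \<theta> (fst w); x = x0 + \<sigma> *\<^sub>R snd w in f x \<bullet> cond_score \<sigma> x0 x)
      = (\<lambda>w. \<psi> (fst w, g \<theta> (fst w) + \<sigma> *\<^sub>R snd w))"
    by (simp add: \<psi>_def Let_def)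
  have "(\<integral>w. (let x0 = g \<theta> (fst w); x = x0 + \<sigma> *\<^sub>R snd w in f x \<bullet> cond_score \<sigma> x0 x)
             \<partial>(pZ \<Otimes>\<^sub>M std_gauss))
      = (\<integral>x. (\<integral>z. gauss_pdf \<sigma> (g \<theta> z) x * \<psi> (z, x) \<partial>pZ) \<partial>lborel)"
    unfolding sample
    by (rule integral_noise_pair_iterated[OF g sigma_pos prob_space_imp_sigma_finite[OF pZ] \<psi>_meas
          int[unfolded sample]])
  also have "\<dots> = (\<integral>x. noised_density g pZ \<sigma> \<theta> x * (f x \<bullet> score g pZ \<sigma> \<theta> x) \<partial>lborel)"
  proof (rule Bochner_Integration.integral_cong [OF refl])
    fix x :: 'd
    have int_z: "integrable pZ (\<lambda>z. gauss_pdf \<sigma> (g \<theta> z) x *\<^sub>R cond_score \<sigma> (g \<theta> z) x)"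
      using integrable_gauss_grad_mixture[OF pZ g sigma_pos]
      by (simp only: gauss_pdf_scaleR_cond_score[OF sigma_pos])
    have "(\<integral>z. gauss_pdf \<sigma> (g \<theta> z) x * \<psi> (z, x) \<partial>pZ)
        = (\<integral>z. f x \<bullet> (gauss_pdf \<sigma> (g \<theta> z) x *\<^sub>R cond_score \<sigma> (g \<theta> z) x) \<partial>pZ)"
      by (rule Bochner_Integration.integral_cong) (simp_all add: \<psi>_def)
    also have "\<dots> = f x \<bullet> (\<integral>z. gauss_pdf \<sigma> (g \<theta> z) x *\<^sub>R cond_score \<sigma> (g \<theta> z) x \<partial>pZ)"
      by (rule integral_inner_right[OF int_z])
    also have "\<dots> = noised_density g pZ \<sigma> \<theta> x * (f x \<bullet> score g pZ \<sigma> \<theta> x)"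
      by (simp add: noised_density_scaleR_score[where g=g and \<theta>=\<theta>, OF pZ g sigma_pos, symmetric])
    finally show "(\<integral>z. gauss_pdf \<sigma> (g \<theta> z) x * \<psi> (z, x) \<partial>pZ) = \<dots>" .
  qed
  finally show ?thesis .
qed

lemma F_obj_eq_noised_integrals:
  fixes sq :: "'d \<Rightarrow> 'd" and \<theta>' :: 'p
  defines "s' \<equiv> score g pZ \<sigma> \<theta>'"
  assumes sq [measurable]: "sq \<in> borel_measurable borel"
    and s' [measurable]: "s' \<in> borel_measurable borel"
    and int_score: "integrable (pZ \<Otimes>\<^sub>M std_gauss) (\<lambda>w. let x = g \<theta> (fst w) + \<sigma> *\<^sub>R snd w in
                      norm (sq x - s' x) * norm (s' x))"
    and int_cond: "integrable (pZ \<Otimes>\<^sub>M std_gauss) (\<lambda>w. let x0 = g \<theta> (fst w); x = x0 + \<sigma> *\<^sub>R snd w in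
                      norm (sq x - s' x) * norm (cond_score \<sigma> x0 x))"
  shows "F_obj sq g pZ \<sigma> \<theta> \<theta>'
           = 2 * (\<integral>x. noised_density g pZ \<sigma> \<theta> x * ((sq x - s' x) \<bullet> s' x) \<partial>lborel)
             - 2 * (\<integral>x. noised_density g pZ \<sigma> \<theta> x * ((sq x - s' x) \<bullet> score g pZ \<sigma> \<theta> x) \<partial>lborel)"
proof -
  define X where "X w = g \<theta> (fst w) + \<sigma> *\<^sub>R snd w" for w
  define C where "C w = (let x0 = g \<theta> (fst w); x = x0 + \<sigma> *\<^sub>R snd w in
                           (sq x - s' x) \<bullet> cond_score \<sigma> x0 x)" for w
  have [measurable]: "X \<in> borel_measurable (pZ \<Otimes>\<^sub>M std_gauss)"
    unfolding X_def by measurable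
  have int1: "integrable (pZ \<Otimes>\<^sub>M std_gauss) (\<lambda>w. (sq (X w) - s' (X w)) \<bullet> s' (X w))"
    by (rule Bochner_Integration.integrable_bound[OF int_score])
       (auto simp: X_def Let_def Cauchy_Schwarz_ineq2)
  have "C \<in> borel_measurable (pZ \<Otimes>\<^sub>M std_gauss)"
    unfolding C_def Let_def cond_score_gauss[OF sigma_pos] by measurable
  then have int2: "integrable (pZ \<Otimes>\<^sub>M std_gauss) C"
    by (rule Bochner_Integration.integrable_bound[OF int_cond])
       (auto simp: C_def Let_def Cauchy_Schwarz_ineq2)
  have "F_obj sq g pZ \<sigma> \<theta> \<theta>'
      = (\<integral>w. 2 * ((sq (X w) - s' (X w)) \<bullet> s' (X w)) - 2 * C w \<partial>(pZ \<Otimes>\<^sub>M std_gauss))"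
    unfolding F_obj_def s'_def[symmetric]
    by (intro Bochner_Integration.integral_cong refl)
       (simp only: X_def C_def Let_def inner_diff_right right_diff_distrib)
  also have "\<dots> = (\<integral>w. 2 * ((sq (X w) - s' (X w)) \<bullet> s' (X w)) \<partial>(pZ \<Otimes>\<^sub>M std_gauss))
                  - (\<integral>w. 2 * C w \<partial>(pZ \<Otimes>\<^sub>M std_gauss))"
    by (rule Bochner_Integration.integral_diff) (use int1 int2 in auto)
  also have "\<dots> = 2 * (\<integral>w. (sq (X w) - s' (X w)) \<bullet> s' (X w) \<partial>(pZ \<Otimes>\<^sub>M std_gauss))
                  - 2 * (\<integral>w. C w \<partial>(pZ \<Otimes>\<^sub>M std_gauss))"
    by (simp only: integral_mult_right_zero)
  also have "(\<integral>w. (sq (X w) - s' (X w)) \<bullet> s' (X w) \<partial>(pZ \<Otimes>\<^sub>M std_gauss))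
      = (\<integral>x. noised_density g pZ \<sigma> \<theta> x * ((sq x - s' x) \<bullet> s' x) \<partial>lborel)"
    unfolding X_def by (rule integral_noised_sample[OF _ int1[unfolded X_def]]) measurable
  also have "(\<integral>w. C w \<partial>(pZ \<Otimes>\<^sub>M std_gauss))
      = (\<integral>x. noised_density g pZ \<sigma> \<theta> x * ((sq x - s' x) \<bullet> score g pZ \<sigma> \<theta> x) \<partial>lborel)"
    unfolding C_def by (rule integral_inner_cond_score[OF _ int2[unfolded C_def]]) measurable
  finally show ?thesis .
qed

end

theorem theorem1:
  fixes g :: "'p::euclidean_space \<Rightarrow> 'z::euclidean_space \<Rightarrow> 'd::euclidean_space"
    and pZ :: "'z measure"
    and \<sigma> :: real
    and sq :: "'d \<Rightarrow> 'd"
    and p :: "'p \<Rightarrow> 'd \<Rightarrow> real"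
    and s :: "'p \<Rightarrow> 'd \<Rightarrow> 'd"
    and \<theta>0 :: 'p
    and U :: "'p set"
    and Dp :: "'d \<Rightarrow> 'p \<Rightarrow> real"
    and Ds :: "'d \<Rightarrow> 'p \<Rightarrow> 'd"
  assumes pZ: "prob_space pZ" "sets pZ = sets borel"
    and sigma_pos: "\<sigma> > 0"
    and p_def: "p = noised_density g pZ \<sigma>"
    and s_def: "s = score g pZ \<sigma>"
    and g_meas: "\<And>\<theta>. g \<theta> \<in> borel_measurable pZ"
    and sq_diff: "\<And>x. sq differentiable (at x)"
    and s_meas: "\<And>\<theta>. s \<theta> \<in> borel_measurable borel"
    and U: "open U" "\<theta>0 \<in> U"
    \<comment> \<open>differentiability of p and s in theta at theta0 (for every x)\<close>
    and p_diff: "\<And>x. ((\<lambda>\<theta>. p \<theta> x) has_derivative Dp x) (at \<theta>0)"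
    and s_diff: "\<And>x. ((\<lambda>\<theta>. s \<theta> x) has_derivative Ds x) (at \<theta>0)"
    \<comment> \<open>integrability near theta0\<close>
    and int1: "\<And>\<theta>. \<theta> \<in> U \<Longrightarrow> integrable (pZ \<Otimes>\<^sub>M std_gauss)
        (\<lambda>ze. let x = g \<theta> (fst ze) + \<sigma> *\<^sub>R snd ze in
              norm (sq x - s \<theta>0 x) * norm (s \<theta>0 x))"
    and int2: "\<And>\<theta>. \<theta> \<in> U \<Longrightarrow> integrable (pZ \<Otimes>\<^sub>M std_gauss)
        (\<lambda>ze. let x0 = g \<theta> (fst ze); x = x0 + \<sigma> *\<^sub>R snd ze in
              norm (sq x - s \<theta>0 x) * norm (cond_score \<sigma> x0 x))"
    and int3: "\<And>u. integrable lborel (\<lambda>x. Dp x u * ((sq x - s \<theta>0 x) \<bullet> s \<theta>0 x))"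
    and int4: "\<And>u. integrable lborel (\<lambda>x. p \<theta>0 x * ((sq x - s \<theta>0 x) \<bullet> Ds x u))"
    \<comment> \<open>permissibility of exchanging differentiation in theta and expectation over x ~ p_theta\<close>
    and exch1: "((\<lambda>\<theta>. \<integral>x. p \<theta> x * ((sq x - s \<theta>0 x) \<bullet> s \<theta>0 x) \<partial>lborel) has_derivative
                 (\<lambda>u. \<integral>x. Dp x u * ((sq x - s \<theta>0 x) \<bullet> s \<theta>0 x) \<partial>lborel)) (at \<theta>0)"
    and exch2: "((\<lambda>\<theta>. \<integral>x. p \<theta> x * ((sq x - s \<theta>0 x) \<bullet> s \<theta> x) \<partial>lborel) has_derivative
                 (\<lambda>u. \<integral>x. Dp x u * ((sq x - s \<theta>0 x) \<bullet> s \<theta>0 x)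
                          + p \<theta>0 x * ((sq x - s \<theta>0 x) \<bullet> Ds x u) \<partial>lborel)) (at \<theta>0)"
  shows "((\<lambda>\<theta>. F_obj sq g pZ \<sigma> \<theta> \<theta>0) has_derivative
           (\<lambda>u. \<integral>x. p \<theta>0 x * (- 2 * ((sq x - s \<theta>0 x) \<bullet> Ds x u)) \<partial>lborel)) (at \<theta>0)"
proof -
  define A where "A \<theta> = (\<integral>x. p \<theta> x * ((sq x - s \<theta>0 x) \<bullet> s \<theta>0 x) \<partial>lborel)" for \<theta>
  define B where "B \<theta> = (\<integral>x. p \<theta> x * ((sq x - s \<theta>0 x) \<bullet> s \<theta> x) \<partial>lborel)" for \<theta>
  define a where "a u = (\<integral>x. Dp x u * ((sq x - s \<theta>0 x) \<bullet> s \<theta>0 x) \<partial>lborel)" for u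
  define b where "b u = (\<integral>x. p \<theta>0 x * ((sq x - s \<theta>0 x) \<bullet> Ds x u) \<partial>lborel)" for u
  have "continuous_on UNIV sq"
    by (intro continuous_at_imp_continuous_on ballI differentiable_imp_continuous_within sq_diff)
  then have sq_meas: "sq \<in> borel_measurable borel"
    by (rule borel_measurable_continuous_onI)
  have F_eq: "F_obj sq g pZ \<sigma> \<theta> \<theta>0 = 2 * A \<theta> - 2 * B \<theta>" if "\<theta> \<in> U" for \<theta>
    unfolding A_def B_def p_def s_def
    by (rule F_obj_eq_noised_integrals[where g=g and \<theta>=\<theta>, OF pZ(1) g_meas sigma_pos sq_meas
          s_meas[unfolded s_def] int1[OF that, unfolded s_def] int2[OF that, unfolded s_def]])
  have eq: "2 * a u - 2 * (a u + b u) = (\<integral>x. p \<theta>0 x * (- 2 * ((sq x - s \<theta>0 x) \<bullet> Ds x u)) \<partial>lborel)"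
    for u
  proof -
    have integrand: "(\<lambda>x. p \<theta>0 x * (- 2 * ((sq x - s \<theta>0 x) \<bullet> Ds x u)))
        = (\<lambda>x. - 2 * (p \<theta>0 x * ((sq x - s \<theta>0 x) \<bullet> Ds x u)))"
      by (rule ext) (rule mult.left_commute)
    have "2 * a u - 2 * (a u + b u) = - 2 * b u"
      by (simp add: algebra_simps)
    also have "\<dots> = (\<integral>x. p \<theta>0 x * (- 2 * ((sq x - s \<theta>0 x) \<bullet> Ds x u)) \<partial>lborel)"
      by (simp only: b_def integrand integral_mult_right_zero)
    finally show ?thesis .
  qed
  have "((\<lambda>\<theta>. 2 * A \<theta> - 2 * B \<theta>) has_derivative (\<lambda>u. 2 * a u - 2 * (a u + b u))) (at \<theta>0)"
    using exch1 exch2 unfolding A_def B_def a_def b_def Bochner_Integration.integral_add[OF int3 int4]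
    by (intro has_derivative_diff has_derivative_mult_right)
  then show ?thesis
    unfolding eq by (rule has_derivative_transform_within_open[OF _ U]) (simp add: F_eq)
qed

end
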